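(* Let $A$ be a finite alphabet. If the sliding block code $\phi: A^{\mathbb{N}} \to A^{\mathbb{N}}$ is a local homeomorphism that $*$-commutes with the shift map $\sigma$, then $\phi$ is a $k$-fold covering map for some $k\in\mathbb{N}$.
   Context: $A$ is a finite set with the discrete topology; $\mathbb{N}=\{1,2,3,\dots\}$; $A^{\mathbb{N}}$ is the space of one-sided infinite sequences over $A$ with the product topology; $\sigma(x_1x_2x_3\cdots)=x_2x_3\cdots$. A sliding block code is a map $\tau_d: A^{\mathbb{N}}\to A^{\mathbb{N}}$, $\tau_d(x)_i=d(x_i\cdots x_{i+n-1})$, for some $n\in\mathbb{N}$ and function $d:A^n\to A$. A continuous map $f:X\to Y$ is a local homeomorphism if every $x\in X$ has an open neighborhood $U$ such that $f(U)$ is open in $Y$ and $f:U\to f(U)$ is a homeomorphism. Two functions $S,T: X\to X$ $*$-commute if $ST=TS$ and for every $(y,z)$ with $S(y)=T(z)$ there exists a unique $x$ with $T(x)=y$ and $S(x)=z$. For a continuous surjection $p:E\to B$, an open set $U\subseteq B$ is evenly covered if $p^{-1}(U)$ is a union of pairwise disjoint open sets $V_\alpha$ each of which $p$ maps homeomorphically onto $U$; $p$ is a covering map if every point of $B$ has an evenly covered open neighborhood, and a $k$-fold covering map if moreover $|p^{-1}(b)|=k$ for every $b\in B$. *)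

theory Defs
  imports "HOL-Analysis.Analysis"
begin

text \<open>The full shift: one-sided sequences over a finite alphabet (the type 'a),
  indexed by nat (position 0 plays the role of position 1), with the product
  of discrete topologies.\<close>

definition shift_space :: "(nat \<Rightarrow> 'a) topology" where
  "shift_space = product_topology (\<lambda>_. discrete_topology UNIV) UNIV"

definition shift :: "(nat \<Rightarrow> 'a) \<Rightarrow> (nat \<Rightarrow> 'a)" where
  "shift x = (\<lambda>i. x (Suc i))"

text \<open>Sliding block code tau_d with window length n and block map d : A^n -> A
  (words of length n represented as lists of length n).\<close>
definition sliding_block_code :: "((nat \<Rightarrow> 'a) \<Rightarrow> (nat \<Rightarrow> 'a)) \<Rightarrow> bool" where
  "sliding_block_code \<phi> \<longleftrightarrow>
     (\<exists>n::nat. n \<ge> 1 \<and> (\<exists>d :: 'a list \<Rightarrow> 'a.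
        \<forall>x i. \<phi> x i = d (map (\<lambda>j. x (i + j)) [0..<n])))"

definition local_homeomorphism :: "'a topology \<Rightarrow> 'b topology \<Rightarrow> ('a \<Rightarrow> 'b) \<Rightarrow> bool" where
  "local_homeomorphism X Y f \<longleftrightarrow>
     continuous_map X Y f \<and>
     (\<forall>x \<in> topspace X. \<exists>U. openin X U \<and> x \<in> U \<and> openin Y (f ` U) \<and>
        homeomorphic_map (subtopology X U) (subtopology Y (f ` U)) f)"

definition star_commute :: "('a \<Rightarrow> 'a) \<Rightarrow> ('a \<Rightarrow> 'a) \<Rightarrow> bool" where
  "star_commute S T \<longleftrightarrow>
     S \<circ> T = T \<circ> S \<and>
     (\<forall>y z. S y = T z \<longrightarrow> (\<exists>!x. T x = y \<and> S x = z))"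

definition evenly_covered :: "'a topology \<Rightarrow> 'b topology \<Rightarrow> ('a \<Rightarrow> 'b) \<Rightarrow> 'b set \<Rightarrow> bool" where
  "evenly_covered E B p U \<longleftrightarrow>
     openin B U \<and>
     (\<exists>\<V>. \<Union>\<V> = {x \<in> topspace E. p x \<in> U} \<and> pairwise disjnt \<V> \<and>
        (\<forall>V \<in> \<V>. openin E V \<and> homeomorphic_map (subtopology E V) (subtopology B U) p))"

definition covering_map :: "'a topology \<Rightarrow> 'b topology \<Rightarrow> ('a \<Rightarrow> 'b) \<Rightarrow> bool" where
  "covering_map E B p \<longleftrightarrow>
     continuous_map E B p \<and> p ` topspace E = topspace B \<and>
     (\<forall>b \<in> topspace B. \<exists>U. b \<in> U \<and> evenly_covered E B p U)"

definition k_fold_covering_map :: "nat \<Rightarrow> 'a topology \<Rightarrow> 'b topology \<Rightarrow> ('a \<Rightarrow> 'b) \<Rightarrow> bool" where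
  "k_fold_covering_map k E B p \<longleftrightarrow>
     covering_map E B p \<and>
     (\<forall>b \<in> topspace B. finite {x \<in> topspace E. p x = b} \<and> card {x \<in> topspace E. p x = b} = k)"

end

theory Submission
  imports Defs
begin

text \<open>Since the full shift is compact Hausdorff, a local homeomorphism \<open>\<phi>\<close> of it is a proper
  map with finite fibres. The points of the fibre over \<open>b\<close> have pairwise disjoint sheets, and
  closedness of \<open>\<phi>\<close> yields a neighbourhood of \<open>b\<close> whose preimage lies inside them; this
  neighbourhood is evenly covered and all fibres over it have the size of the fibre over \<open>b\<close>.
  So the fibre size is locally constant. The \<open>*\<close>-commutation makes the shift a bijection
  from the fibre over \<open>z\<close> onto the fibre over \<open>shift z\<close>, so the fibre size is also
  shift-invariant. Every open set contains a cylinder, and the shifts of a cylinder cover the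
  whole space; hence the fibre size is constant, and the open, shift-closed image of \<open>\<phi>\<close> is
  everything.\<close>

definition homeomorphic_onto_open :: "'a topology \<Rightarrow> 'b topology \<Rightarrow> ('a \<Rightarrow> 'b) \<Rightarrow> 'a set \<Rightarrow> bool" where
  "homeomorphic_onto_open X Y f U \<longleftrightarrow>
     openin X U \<and> openin Y (f ` U) \<and> homeomorphic_map (subtopology X U) (subtopology Y (f ` U)) f"

lemma local_homeomorphism_iff_homeomorphic_onto_open:
  "local_homeomorphism X Y f \<longleftrightarrow>
     continuous_map X Y f \<and> (\<forall>x \<in> topspace X. \<exists>U. x \<in> U \<and> homeomorphic_onto_open X Y f U)"
  unfolding local_homeomorphism_def homeomorphic_onto_open_def by blast

lemma homeomorphic_onto_open_imp_inj_on:
  assumes "homeomorphic_onto_open X Y f U"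
  shows "inj_on f U"
  using assms homeomorphic_imp_injective_map openin_subset
  unfolding homeomorphic_onto_open_def by (metis topspace_subtopology_subset)

lemma homeomorphic_onto_open_subset:
  assumes U: "homeomorphic_onto_open X Y f U" and V: "openin X V" "V \<subseteq> U"
  shows "homeomorphic_onto_open X Y f V"
proof -
  have hom: "homeomorphic_map (subtopology X U) (subtopology Y (f ` U)) f"
    and opens: "openin X U" "openin Y (f ` U)"
    using U by (auto simp: homeomorphic_onto_open_def)
  have "openin (subtopology Y (f ` U)) (f ` V)"
    using hom homeomorphic_imp_open_map open_map_def opens(1) V openin_open_subtopology by blast
  then have "openin Y (f ` V)"
    using opens(2) openin_open_subtopology by blast
  moreover
  have "homeomorphic_map (subtopology (subtopology X U) V) (subtopology (subtopology Y (f ` U)) (f ` V)) f"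
    using V openin_subset[OF V(1)] openin_subset[OF opens(2)]
    by (intro homeomorphic_map_subtopologies[OF hom]) auto
  then have "homeomorphic_map (subtopology X V) (subtopology Y (f ` V)) f"
    using V(2) by (simp add: subtopology_subtopology Int_absorb1 image_mono)
  ultimately show ?thesis
    using V(1) by (simp add: homeomorphic_onto_open_def)
qed

lemma local_homeomorphism_imp_open_map:
  assumes "local_homeomorphism X Y f"
  shows "open_map X Y f"
  unfolding open_map_def
proof (intro allI impI)
  fix W assume W: "openin X W"
  show "openin Y (f ` W)"
  proof (subst openin_subopen, intro ballI)
    fix y assume "y \<in> f ` W"
    then obtain x where x: "x \<in> W" "y = f x" by blast
    then obtain U where "x \<in> U" "homeomorphic_onto_open X Y f U"
      using assms openin_subset[OF W] by (auto simp: local_homeomorphism_iff_homeomorphic_onto_open)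
    moreover have "openin X (U \<inter> W)"
      using \<open>homeomorphic_onto_open X Y f U\<close> W by (auto simp: homeomorphic_onto_open_def)
    ultimately have "homeomorphic_onto_open X Y f (U \<inter> W)"
      using homeomorphic_onto_open_subset by blast
    then show "\<exists>T. openin Y T \<and> y \<in> T \<and> T \<subseteq> f ` W"
      using x \<open>x \<in> U\<close> by (auto simp: homeomorphic_onto_open_def)
  qed
qed

lemma finite_fibre_local_homeomorphism:
  assumes "local_homeomorphism X Y f" "proper_map X Y f" "y \<in> topspace Y"
  shows "finite {x \<in> topspace X. f x = y}" (is "finite ?F")
proof -
  have "x \<notin> X derived_set_of ?F" if x: "x \<in> ?F" for x
  proof -
    obtain U where U: "x \<in> U" "homeomorphic_onto_open X Y f U"
      using assms(1) x by (auto simp: local_homeomorphism_iff_homeomorphic_onto_open)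
    then have "?F \<inter> U \<subseteq> {x}"
      using x by (auto dest: inj_onD[OF homeomorphic_onto_open_imp_inj_on])
    then show ?thesis
      using U by (auto simp: in_derived_set_of homeomorphic_onto_open_def)
  qed
  then have "?F \<inter> X derived_set_of ?F = {}"
    by blast
  moreover have "compactin X ?F"
    using assms(2,3) by (simp add: proper_map_def)
  ultimately show ?thesis
    by (simp add: discrete_compactin_eq_finite)
qed

lemma Hausdorff_space_finite_disjoint_neighbourhoods:
  assumes "Hausdorff_space X" "finite F" "F \<subseteq> topspace X"
  obtains W where "\<And>x. x \<in> F \<Longrightarrow> openin X (W x) \<and> x \<in> W x"
    "\<And>x y. \<lbrakk>x \<in> F; y \<in> F; x \<noteq> y\<rbrakk> \<Longrightarrow> disjnt (W x) (W y)"
proof -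
  have "\<exists>A B. openin X A \<and> openin X B \<and> x \<in> A \<and> y \<in> B \<and> disjnt A B"
    if "x \<in> F" "y \<in> F" "x \<noteq> y" for x y
    using assms(1,3) that unfolding Hausdorff_space_def by blast
  then obtain P Q where PQ: "\<And>x y. \<lbrakk>x \<in> F; y \<in> F; x \<noteq> y\<rbrakk> \<Longrightarrow>
      openin X (P x y) \<and> openin X (Q x y) \<and> x \<in> P x y \<and> y \<in> Q x y \<and> disjnt (P x y) (Q x y)"
    by metis
  define W where "W x = (\<Inter>y \<in> F - {x}. P x y \<inter> Q y x) \<inter> topspace X" for x
  show thesis
  proof
    show "openin X (W x) \<and> x \<in> W x" if "x \<in> F" for x
      unfolding W_def using that PQ assms(2,3) by (intro conjI openin_INT) auto
    show "disjnt (W x) (W y)" if "x \<in> F" "y \<in> F" "x \<noteq> y" for x y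
    proof -
      have "W x \<subseteq> P x y" "W y \<subseteq> Q x y"
        unfolding W_def using that by auto
      then show ?thesis
        using PQ[OF that] by (meson disjnt_subset1 disjnt_subset2)
    qed
  qed
qed

lemma local_homeomorphism_disjoint_sheets:
  assumes "local_homeomorphism X Y f" "Hausdorff_space X" "finite F" "F \<subseteq> topspace X"
  obtains V where "\<And>x. x \<in> F \<Longrightarrow> x \<in> V x \<and> homeomorphic_onto_open X Y f (V x)"
    "\<And>x y. \<lbrakk>x \<in> F; y \<in> F; x \<noteq> y\<rbrakk> \<Longrightarrow> disjnt (V x) (V y)"
proof -
  obtain W where W: "\<And>x. x \<in> F \<Longrightarrow> openin X (W x) \<and> x \<in> W x"
    "\<And>x y. \<lbrakk>x \<in> F; y \<in> F; x \<noteq> y\<rbrakk> \<Longrightarrow> disjnt (W x) (W y)"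
    using Hausdorff_space_finite_disjoint_neighbourhoods assms(2-4) by metis
  obtain U where U: "\<And>x. x \<in> F \<Longrightarrow> x \<in> U x \<and> homeomorphic_onto_open X Y f (U x)"
    using assms(1,4) unfolding local_homeomorphism_iff_homeomorphic_onto_open by (metis subsetD)
  show thesis
  proof
    show "x \<in> U x \<inter> W x \<and> homeomorphic_onto_open X Y f (U x \<inter> W x)" if "x \<in> F" for x
    proof -
      have "openin X (U x \<inter> W x)"
        using U[OF that] W(1)[OF that] by (auto simp: homeomorphic_onto_open_def)
      then show ?thesis
        using U[OF that] W(1)[OF that] homeomorphic_onto_open_subset by blast
    qed
    show "disjnt (U x \<inter> W x) (U y \<inter> W y)" if "x \<in> F" "y \<in> F" "x \<noteq> y" for x y
      using W(2)[OF that] by (auto simp: disjnt_def)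
  qed
qed

lemma evenly_covered_by_sheets:
  assumes f: "continuous_map X Y f" and U: "openin Y U"
    and sheets: "\<And>x. x \<in> F \<Longrightarrow> homeomorphic_onto_open X Y f (V x) \<and> U \<subseteq> f ` V x"
    and disj: "\<And>x y. \<lbrakk>x \<in> F; y \<in> F; x \<noteq> y\<rbrakk> \<Longrightarrow> disjnt (V x) (V y)"
    and cover: "{z \<in> topspace X. f z \<in> U} \<subseteq> (\<Union>x \<in> F. V x)"
  shows "evenly_covered X Y f U"
proof -
  define S where "S x = {z \<in> topspace X. f z \<in> U} \<inter> V x" for x
  have S: "homeomorphic_onto_open X Y f (S x) \<and> f ` S x = U" if "x \<in> F" for x
  proof
    have "openin X (S x)"
      unfolding S_def using sheets[OF that] openin_continuous_map_preimage[OF f U]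
      by (auto simp: homeomorphic_onto_open_def)
    then show "homeomorphic_onto_open X Y f (S x)"
      using sheets[OF that] homeomorphic_onto_open_subset unfolding S_def by blast
    show "f ` S x = U"
      using sheets[OF that] openin_subset[of X "V x"]
      unfolding S_def homeomorphic_onto_open_def by blast
  qed
  show ?thesis
    unfolding evenly_covered_def
  proof (intro conjI exI[of _ "S ` F"])
    show "\<Union> (S ` F) = {z \<in> topspace X. f z \<in> U}"
      using cover unfolding S_def by blast
    show "pairwise disjnt (S ` F)"
      using disj unfolding S_def pairwise_def disjnt_def by blast
    show "\<forall>W \<in> S ` F. openin X W \<and> homeomorphic_map (subtopology X W) (subtopology Y U) f"
      using S by (auto simp: homeomorphic_onto_open_def)
  qed (fact U)
qed

lemma card_fibre_eq_card_sheets: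
  assumes sheets: "\<And>x. x \<in> F \<Longrightarrow> inj_on f (V x) \<and> V x \<subseteq> A \<and> u \<in> f ` V x"
    and disj: "\<And>x y. \<lbrakk>x \<in> F; y \<in> F; x \<noteq> y\<rbrakk> \<Longrightarrow> disjnt (V x) (V y)"
    and cover: "{z \<in> A. f z = u} \<subseteq> (\<Union>x \<in> F. V x)"
  shows "card {z \<in> A. f z = u} = card F"
proof -
  have lift: "inv_into (V x) f u \<in> V x \<and> f (inv_into (V x) f u) = u" if "x \<in> F" for x
    using sheets[OF that] by (auto intro: inv_into_into f_inv_into_f)
  have "bij_betw (\<lambda>x. inv_into (V x) f u) F {z \<in> A. f z = u}"
  proof (rule bij_betwI')
    show "(inv_into (V x) f u = inv_into (V y) f u) \<longleftrightarrow> x = y" if "x \<in> F" "y \<in> F" for x y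
      using lift[OF that(1)] lift[OF that(2)] disj[OF that] by (cases "x = y") (auto simp: disjnt_iff)
    show "inv_into (V x) f u \<in> {z \<in> A. f z = u}" if "x \<in> F" for x
      using lift[OF that] sheets[OF that] by auto
    show "\<exists>x \<in> F. z = inv_into (V x) f u" if z: "z \<in> {z \<in> A. f z = u}" for z
    proof -
      obtain x where "x \<in> F" "z \<in> V x"
        using cover z by blast
      moreover have "inv_into (V x) f u = z"
        using inv_into_f_f[OF conjunct1[OF sheets[OF \<open>x \<in> F\<close>]] \<open>z \<in> V x\<close>] z by simp
      ultimately show ?thesis
        by blast
    qed
  qed
  from bij_betw_same_card[OF this] show ?thesis
    by simp
qed

lemma proper_local_homeomorphism_sheets_over_neighbourhood:
  assumes lh: "local_homeomorphism X Y f" and proper: "proper_map X Y f"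
    and X: "Hausdorff_space X" and b: "b \<in> topspace Y"
  obtains U V where "openin Y U" "b \<in> U"
    "\<And>x. x \<in> {x \<in> topspace X. f x = b} \<Longrightarrow> homeomorphic_onto_open X Y f (V x) \<and> U \<subseteq> f ` V x"
    "\<And>x y. \<lbrakk>x \<in> {x \<in> topspace X. f x = b}; y \<in> {x \<in> topspace X. f x = b}; x \<noteq> y\<rbrakk>
      \<Longrightarrow> disjnt (V x) (V y)"
    "{x \<in> topspace X. f x \<in> U} \<subseteq> (\<Union>x \<in> {x \<in> topspace X. f x = b}. V x)"
proof -
  define F where "F = {x \<in> topspace X. f x = b}"
  have F: "finite F" "F \<subseteq> topspace X"
    unfolding F_def using finite_fibre_local_homeomorphism[OF lh proper b] by auto
  obtain V where V: "\<And>x. x \<in> F \<Longrightarrow> x \<in> V x \<and> homeomorphic_onto_open X Y f (V x)"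
    and disj: "\<And>x y. \<lbrakk>x \<in> F; y \<in> F; x \<noteq> y\<rbrakk> \<Longrightarrow> disjnt (V x) (V y)"
    using local_homeomorphism_disjoint_sheets[OF lh X F] by blast
  have "openin X (\<Union>x \<in> F. V x) \<and> b \<in> topspace Y \<and> F \<subseteq> (\<Union>x \<in> F. V x)"
    using V b by (auto simp: homeomorphic_onto_open_def)
  moreover have "closed_map X Y f"
    using proper by (simp add: proper_map_def)
  ultimately obtain T where T: "openin Y T" "b \<in> T" "{x \<in> topspace X. f x \<in> T} \<subseteq> (\<Union>x \<in> F. V x)"
    unfolding closed_map_fibre_neighbourhood F_def by blast
  define U where "U = T \<inter> \<Inter> ((\<lambda>x. f ` V x) ` F)"
  show thesis
  proof (rule that[of U V, folded F_def])
    show "openin Y U"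
      unfolding U_def using T(1) F(1) V
      by (intro openin_Int_Inter) (auto simp: homeomorphic_onto_open_def)
    have "b \<in> f ` V x" if "x \<in> F" for x
      using V[OF that] that unfolding F_def by force
    then show "b \<in> U"
      unfolding U_def using T(2) by blast
    show "homeomorphic_onto_open X Y f (V x) \<and> U \<subseteq> f ` V x" if "x \<in> F" for x
      using V[OF that] that unfolding U_def by auto
    show "{x \<in> topspace X. f x \<in> U} \<subseteq> (\<Union>x \<in> F. V x)"
      using T(3) unfolding U_def by blast
  qed (fact disj)
qed

lemma proper_local_homeomorphism_evenly_covered:
  assumes lh: "local_homeomorphism X Y f" and proper: "proper_map X Y f"
    and X: "Hausdorff_space X" and b: "b \<in> topspace Y"
  shows "\<exists>U. b \<in> U \<and> evenly_covered X Y f U \<and>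
    (\<forall>u \<in> U. card {x \<in> topspace X. f x = u} = card {x \<in> topspace X. f x = b})"
proof -
  define F where "F = {x \<in> topspace X. f x = b}"
  obtain U V where U: "openin Y U" "b \<in> U"
    and sheets: "\<And>x. x \<in> F \<Longrightarrow> homeomorphic_onto_open X Y f (V x) \<and> U \<subseteq> f ` V x"
    and disj: "\<And>x y. \<lbrakk>x \<in> F; y \<in> F; x \<noteq> y\<rbrakk> \<Longrightarrow> disjnt (V x) (V y)"
    and cover: "{x \<in> topspace X. f x \<in> U} \<subseteq> (\<Union>x \<in> F. V x)"
    unfolding F_def using proper_local_homeomorphism_sheets_over_neighbourhood[OF lh proper X b] by blast
  have "evenly_covered X Y f U"
    using evenly_covered_by_sheets[OF _ U(1) sheets disj cover] lh
    by (simp add: local_homeomorphism_def)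
  moreover have "card {x \<in> topspace X. f x = u} = card F" if "u \<in> U" for u
  proof (rule card_fibre_eq_card_sheets[where V = V])
    show "inj_on f (V x) \<and> V x \<subseteq> topspace X \<and> u \<in> f ` V x" if "x \<in> F" for x
      using sheets[OF that] \<open>u \<in> U\<close> homeomorphic_onto_open_imp_inj_on[of X Y f "V x"]
        openin_subset[of X "V x"] unfolding homeomorphic_onto_open_def by blast
    show "{z \<in> topspace X. f z = u} \<subseteq> (\<Union>x \<in> F. V x)"
      using cover \<open>u \<in> U\<close> by blast
  qed (fact disj)
  ultimately show ?thesis
    using U(2) unfolding F_def by blast
qed

lemma proper_local_homeomorphism_k_fold_covering_map:
  assumes lh: "local_homeomorphism X Y f" and proper: "proper_map X Y f"
    and X: "Hausdorff_space X" and surj: "f ` topspace X = topspace Y"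
    and k: "\<And>y. y \<in> topspace Y \<Longrightarrow> card {x \<in> topspace X. f x = y} = k"
  shows "k_fold_covering_map k X Y f"
  unfolding k_fold_covering_map_def covering_map_def
proof (intro conjI ballI)
  show "continuous_map X Y f"
    using lh by (simp add: local_homeomorphism_def)
  show "\<exists>U. y \<in> U \<and> evenly_covered X Y f U" if "y \<in> topspace Y" for y
    using proper_local_homeomorphism_evenly_covered[OF lh proper X that] by blast
  show "finite {x \<in> topspace X. f x = y}" if "y \<in> topspace Y" for y
    using finite_fibre_local_homeomorphism[OF lh proper that] .
qed (use surj k in auto)

lemma topspace_shift_space [simp]: "topspace shift_space = UNIV"
  by (simp add: shift_space_def)

lemma compact_space_shift_space: "compact_space (shift_space :: (nat \<Rightarrow> 'a::finite) topology)"
  by (simp add: shift_space_def compact_space_product_topology compact_space_discrete_topology)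

lemma Hausdorff_space_shift_space: "Hausdorff_space shift_space"
  by (simp add: shift_space_def Hausdorff_space_product_topology)

lemma openin_shift_space_contains_cylinder:
  assumes "openin shift_space S" "w \<in> S"
  obtains m where "\<And>v. (\<And>i. i < m \<Longrightarrow> v i = w i) \<Longrightarrow> v \<in> S"
proof -
  obtain U where U: "finite {i. U i \<noteq> UNIV}" "w \<in> Pi\<^sub>E UNIV U" "Pi\<^sub>E UNIV U \<subseteq> S"
    using assms unfolding shift_space_def openin_product_topology_alt by auto
  define m where "m = Suc (Max {i. U i \<noteq> UNIV})"
  have "v \<in> S" if v: "\<And>i. i < m \<Longrightarrow> v i = w i" for v
  proof -
    have "v i \<in> U i" for i
    proof (cases "U i = UNIV")
      case False
      then have "i < m"
        using U(1) by (simp add: m_def le_imp_less_Suc)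
      then show ?thesis
        using v U(2) by auto
    qed simp
    then show ?thesis
      using U(3) by auto
  qed
  then show thesis
    using that by blast
qed

lemma funpow_shift: "(shift ^^ m) z = (\<lambda>i. z (i + m))"
  by (induction m arbitrary: z) (auto simp: shift_def funpow_Suc_right)

lemma shift_closed_openin_shift_space_eq_UNIV:
  assumes S: "openin shift_space S" "w \<in> S" and shift: "\<And>z. z \<in> S \<Longrightarrow> shift z \<in> S"
  shows "S = UNIV"
proof -
  obtain m where m: "\<And>v. (\<And>i. i < m \<Longrightarrow> v i = w i) \<Longrightarrow> v \<in> S"
    using openin_shift_space_contains_cylinder[OF S] by blast
  have "z \<in> S" for z
  proof -
    define v where "v i = (if i < m then w i else z (i - m))" for i
    have "v \<in> S"
      using m by (simp add: v_def)
    then have "(shift ^^ m) v \<in> S"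
      by (induction m) (simp_all add: shift)
    moreover have "(shift ^^ m) v = z"
      by (simp add: funpow_shift v_def)
    ultimately show ?thesis
      by simp
  qed
  then show ?thesis
    by blast
qed

lemma shift_invariant_locally_constant_imp_constant:
  assumes shift: "\<And>z. g (shift z) = g z"
    and local_const: "\<And>b. \<exists>U. openin shift_space U \<and> b \<in> U \<and> (\<forall>u \<in> U. g u = g b)"
  shows "g z = g b"
proof -
  have "openin shift_space {z. g z = g b}"
    by (subst openin_subopen) (metis (mono_tags, lifting) local_const mem_Collect_eq subsetI)
  then have "{z. g z = g b} = UNIV"
    by (rule shift_closed_openin_shift_space_eq_UNIV) (simp_all add: shift)
  then show ?thesis
    by blast
qed

lemma star_commute_bij_betw_fibres:
  assumes "star_commute S T"
  shows "bij_betw T {x. S x = z} {x. S x = T z}"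
proof (rule bij_betwI')
  have comm: "S (T x) = T (S x)" for x
    using assms unfolding star_commute_def by (metis comp_apply)
  have lift: "\<exists>x. T x = y \<and> S x = z" if "S y = T z" for y
    using assms that unfolding star_commute_def by blast
  have lift_unique: "x = x'" if "S y = T z" "T x = y" "S x = z" "T x' = y" "S x' = z" for y x x'
    using assms that unfolding star_commute_def by blast
  show "(T x = T x') \<longleftrightarrow> x = x'" if "x \<in> {x. S x = z}" "x' \<in> {x. S x = z}" for x x'
    using lift_unique[of "T x" x x'] that comm by auto
  show "T x \<in> {x. S x = T z}" if "x \<in> {x. S x = z}" for x
    using that comm by simp
  show "\<exists>x \<in> {x. S x = z}. y = T x" if "y \<in> {x. S x = T z}" for y
    using lift[of y] that by auto
qed

lemma proper_map_shift_space:
  fixes f :: "(nat \<Rightarrow> 'a::finite) \<Rightarrow> (nat \<Rightarrow> 'b)"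
  assumes "continuous_map shift_space shift_space f"
  shows "proper_map shift_space shift_space f"
  using assms by (intro continuous_imp_proper_map compact_space_shift_space
      Hausdorff_imp_kc_space Hausdorff_space_shift_space)

lemma surj_open_map_commuting_with_shift:
  assumes "open_map shift_space shift_space f" "\<And>x. f (shift x) = shift (f x)"
  shows "surj f"
proof (rule shift_closed_openin_shift_space_eq_UNIV)
  show "openin shift_space (range f)"
    using assms(1) openin_topspace[of shift_space] unfolding open_map_def by simp blast
  show "shift z \<in> range f" if "z \<in> range f" for z
    using that by (auto simp: assms(2)[symmetric])
qed (rule rangeI)

lemma card_fibre_constant_star_commute_shift:
  fixes \<phi> :: "(nat \<Rightarrow> 'a::finite) \<Rightarrow> (nat \<Rightarrow> 'a)"
  assumes lh: "local_homeomorphism shift_space shift_space \<phi>" and "star_commute \<phi> shift"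
  shows "card {x. \<phi> x = z} = card {x. \<phi> x = b}"
proof (rule shift_invariant_locally_constant_imp_constant[where g = "\<lambda>z. card {x. \<phi> x = z}"])
  show "card {x. \<phi> x = shift z} = card {x. \<phi> x = z}" for z
    using bij_betw_same_card[OF star_commute_bij_betw_fibres[OF assms(2)]] by simp
  have proper: "proper_map shift_space shift_space \<phi>"
    using lh by (simp add: proper_map_shift_space local_homeomorphism_def)
  show "\<exists>U. openin shift_space U \<and> b \<in> U \<and> (\<forall>u \<in> U. card {x. \<phi> x = u} = card {x. \<phi> x = b})" for b
  proof -
    obtain U where "b \<in> U" "evenly_covered shift_space shift_space \<phi> U"
      "\<forall>u \<in> U. card {x. \<phi> x = u} = card {x. \<phi> x = b}"
      using proper_local_homeomorphism_evenly_covered[OF lh proper Hausdorff_space_shift_space, of b]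
      by auto
    then show ?thesis
      unfolding evenly_covered_def by blast
  qed
qed

theorem proposition5p13:
  fixes \<phi> :: "(nat \<Rightarrow> 'a::finite) \<Rightarrow> (nat \<Rightarrow> 'a)"
  assumes "sliding_block_code \<phi>"
    and "local_homeomorphism shift_space shift_space \<phi>"
    and "star_commute \<phi> shift"
  shows "\<exists>k::nat. k \<ge> 1 \<and> k_fold_covering_map k shift_space shift_space \<phi>"
proof -
  note lh = assms(2)
  have proper: "proper_map shift_space shift_space \<phi>"
    using lh by (simp add: proper_map_shift_space local_homeomorphism_def)
  have "surj \<phi>"
    using surj_open_map_commuting_with_shift local_homeomorphism_imp_open_map[OF lh] assms(3)
    unfolding star_commute_def by (metis comp_apply)
  define k where "k = card {x. \<phi> x = \<phi> undefined}"
  have "finite {x. \<phi> x = \<phi> undefined}" "{x. \<phi> x = \<phi> undefined} \<noteq> {}"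
    using finite_fibre_local_homeomorphism[OF lh proper] by auto
  then have "k \<ge> 1"
    unfolding k_def by (simp add: Suc_le_eq card_gt_0_iff)
  moreover have "k_fold_covering_map k shift_space shift_space \<phi>"
    using card_fibre_constant_star_commute_shift[OF lh assms(3)] \<open>surj \<phi>\<close>
    by (intro proper_local_homeomorphism_k_fold_covering_map[OF lh proper Hausdorff_space_shift_space])
      (simp_all add: k_def)
  ultimately show ?thesis
    by blast
qed

end
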